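(* For each $n\ge0$, the map $\psi:\mathcal{D}_n\to\mathfrak{S}_n(321)$ is a bijection satisfying $(\mathrm{hill}(D),\mathrm{seg}(D),\mathrm{lseg}(D))=(\mathrm{fix}(\psi(D)),\mathrm{des}(\psi(D)),\mathrm{ldes}(\psi(D))+1)$ for every $D\in\mathcal{D}_n$.
   Context: A Dyck path of semilength $n$ is a lattice path from $(0,0)$ to $(n,n)$ with east steps $(1,0)$ and north steps $(0,1)$ never passing above the line $y=x$; it is encoded as $D=d_1d_2\cdots d_n$ where $d_i$ is the number of north steps before the $i$-th east step. $\mathcal{D}_n$ is the set of Dyck paths of semilength $n$. Statistics: $\mathrm{hill}(D)$ is the number of east steps that touch the diagonal $y=x$ and are immediately followed by a north step; a segment is a maximal string of at least two consecutive east steps of the same height, and $\mathrm{seg}(D)$ is the number of segments; $\mathrm{lseg}(D)=i$ if the $i$-th east step is the last step of the leftmost segment of $D$, while $\mathrm{lseg}(D)=n+1$ if $D$ has no segment (i.e. $D=01\cdots(n-1)$; in particular the empty path has $\mathrm{lseg}=1$). $\mathfrak{S}_n(321)$ is the set of permutations of $[n]$ with no $i<j<l$ and $\pi_i>\pi_j>\pi_l$. For $\pi\in\mathfrak{S}_n$: $\mathrm{fix}(\pi)=|\{i:\pi_i=i\}|$, $\mathrm{des}(\pi)=|\{i:\pi_i>\pi_{i+1}\}|$, $\mathrm{ldes}(\pi)=\min\{i:\pi_i>\pi_{i+1}\text{ or }i=n\}$ (with $\mathrm{ldes}=0$ for the empty permutation). The map $\psi$ (Krattenthaler's bijection): for $D=d_1\cdots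 d_n$, $\psi(D)=\pi_1\cdots\pi_n$ where $\pi_i=d_i+1$ if $i=n$ or $d_i\ne d_{i+1}$; otherwise, if $i$ is the $j$-th smallest element of $\{l\in[n-1]:d_l=d_{l+1}\}$, then $\pi_i$ is the $j$-th smallest element of $[n]\setminus\{d_1+1,\dots,d_n+1\}$. *)

theory Defs
  imports Main "HOL-Combinatorics.Multiset_Permutations"
begin

text \<open>Positions are 1-based as in the paper: x ent i = x ! (i - 1).\<close>
definition ent :: "nat list \<Rightarrow> nat \<Rightarrow> nat" where
  "ent xs i = xs ! (i - 1)"

text \<open>Dyck paths of semilength n, encoded as D = d_1...d_n (d_i = number of north
steps before the i-th east step). Staying weakly below y = x means d_i \<le> i - 1;
the sequence is weakly increasing.\<close>
definition dyck :: "nat \<Rightarrow> nat list set" where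
  "dyck n = {d. length d = n \<and> (\<forall>i. 1 \<le> i \<and> i < n \<longrightarrow> ent d i \<le> ent d (Suc i))
                \<and> (\<forall>i\<in>{1..n}. ent d i \<le> i - 1)}"

text \<open>hill: east step i starts on the diagonal (point (i-1,i-1)) and the next step is north
(for i < n: d_(i+1) > d_i; for i = n: there remain north steps, d_n < n).\<close>
definition hill :: "nat list \<Rightarrow> nat" where
  "hill d = (let n = length d in card {i\<in>{1..n}. ent d i = i - 1 \<and>
      ((i < n \<and> ent d i < ent d (Suc i)) \<or> (i = n \<and> ent d i < n))})"

definition seg :: "nat list \<Rightarrow> nat" where
  "seg d = (let n = length d in card {i\<in>{1..<n}. ent d i = ent d (Suc i) \<and>
      (i = 1 \<or> ent d (i - 1) \<noteq> ent d i)})"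

text \<open>lseg: position of the last east step of the leftmost segment, n+1 if none.\<close>
definition lseg :: "nat list \<Rightarrow> nat" where
  "lseg d = (let n = length d;
                 E = {i\<in>{2..n}. ent d (i - 1) = ent d i \<and> (i = n \<or> ent d i \<noteq> ent d (Suc i))}
             in if E = {} then n + 1 else Min E)"

definition av321 :: "nat \<Rightarrow> nat list set" where
  "av321 n = {p. p \<in> permutations_of_set {1..n} \<and>
      \<not> (\<exists>i j l. 1 \<le> i \<and> i < j \<and> j < l \<and> l \<le> n \<and> ent p i > ent p j \<and> ent p j > ent p l)}"

definition fixp :: "nat list \<Rightarrow> nat" where
  "fixp p = card {i\<in>{1..length p}. ent p i = i}"

definition des :: "nat list \<Rightarrow> nat" where
  "des p = card {i\<in>{1..<length p}. ent p i > ent p (Suc i)}"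

definition ldes :: "nat list \<Rightarrow> nat" where
  "ldes p = (if p = [] then 0 else
     (LEAST i. 1 \<le> i \<and> ((i < length p \<and> ent p i > ent p (Suc i)) \<or> i = length p)))"

definition psi :: "nat list \<Rightarrow> nat list" where
  "psi d = (let n = length d;
                L = {l\<in>{1..<n}. ent d l = ent d (Suc l)};
                C = {1..n} - {ent d i + 1 | i. i \<in> {1..n}}
            in map (\<lambda>i. if i = n \<or> ent d i \<noteq> ent d (Suc i) then ent d i + 1
                        else sorted_list_of_set C ! (card {l\<in>L. l \<le> i} - 1)) [1..<n+1])"

end

theory Submission
  imports Defs
begin

text \<open>Call a position k of D a run end if k = n or d_k < d_(k+1), and a level step otherwise.
  The permutation psi(D) takes the values d_k + 1 \<le> k at the run ends, and the values missing from
  these, in increasing order, at the level steps; counting shows that the j-th missing value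
  exceeds the j-th level step. So the run ends are exactly the positions where psi(D) lies weakly
  below the diagonal, psi(D) is the union of two increasing subsequences and hence avoids 321, and
  D is recovered as d_i = psi(D)_k - 1 for the first such position k \<ge> i. Conversely, in a
  321-avoiding permutation the values at the weak deficiencies and at the excedances both increase,
  which makes this recovered sequence a Dyck path that psi maps back. Finally, the fixed points of
  psi(D) are the hills of D, and its descents are the positions i with i a level step and i + 1 a
  run end, i.e. the penultimate steps of the segments; this gives seg = des and lseg = ldes + 1.\<close>

lemma strict_sorted_less_nth_eq_set_take:
  fixes xs :: "'a::linorder list"
  assumes "sorted_wrt (<) xs" "j < length xs"
  shows "{a\<in>set xs. a < xs ! j} = set (take j xs)"
proof -
  have split: "xs = take j xs @ xs ! j # drop (Suc j) xs"
    using assms(2) by (simp add: id_take_nth_drop)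
  then have "sorted_wrt (<) (take j xs @ xs ! j # drop (Suc j) xs)"
    using assms(1) by simp
  then have "\<forall>a\<in>set (take j xs). a < xs ! j" "\<forall>a\<in>set (drop (Suc j) xs). xs ! j < a"
    by (simp_all add: sorted_wrt_append)
  moreover have "set xs = set (take j xs) \<union> {xs ! j} \<union> set (drop (Suc j) xs)"
    using arg_cong[where f = set, OF split] by simp
  ultimately show ?thesis
    by (simp only:) (auto dest: order.asym)
qed

lemma card_less_sorted_list_of_set_nth:
  fixes A :: "'a::linorder set"
  assumes "finite A" "j < card A"
  shows "card {a\<in>A. a < sorted_list_of_set A ! j} = j"
proof -
  have "{a\<in>A. a < sorted_list_of_set A ! j} = set (take j (sorted_list_of_set A))"
    using assms strict_sorted_less_nth_eq_set_take[of "sorted_list_of_set A" j] by simp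
  then show ?thesis
    using assms by (simp add: distinct_card)
qed

lemma less_sorted_list_of_set_nth:
  fixes A :: "'a::linorder set"
  assumes "finite A" "j < card A" "card {a\<in>A. a \<le> x} \<le> j"
  shows "x < sorted_list_of_set A ! j"
proof (rule ccontr)
  let ?y = "sorted_list_of_set A ! j"
  assume "\<not> x < ?y"
  moreover have "?y \<in> A"
    using assms(1,2) by (metis length_sorted_list_of_set nth_mem set_sorted_list_of_set)
  ultimately have "insert ?y {a\<in>A. a < ?y} \<subseteq> {a\<in>A. a \<le> x}"
    by auto
  then have "card (insert ?y {a\<in>A. a < ?y}) \<le> card {a\<in>A. a \<le> x}"
    using assms(1) by (intro card_mono) auto
  then have "Suc j \<le> card {a\<in>A. a \<le> x}"
    using assms(1) card_less_sorted_list_of_set_nth[OF assms(1,2)] by simp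
  then show False
    using assms(3) by simp
qed

lemma sorted_list_of_set_image_strict_mono_on:
  fixes f :: "'a::linorder \<Rightarrow> 'b::linorder"
  assumes "finite S" "strict_mono_on S f"
  shows "sorted_list_of_set (f ` S) = map f (sorted_list_of_set S)"
proof -
  have "sorted_wrt (<) (map f (sorted_list_of_set S))"
    unfolding sorted_wrt_map using assms
    by (intro sorted_wrt_mono_rel[OF _ strict_sorted_list_of_set]) (auto dest: strict_mono_onD)
  moreover have "sorted_list_of_set (set ys) = ys" if "sorted_wrt (<) ys" for ys :: "'b list"
    using that by (simp add: sorted_list_of_set_sort_remdups strict_sorted_iff distinct_remdups_id
        sorted_sort_id)
  ultimately show ?thesis
    using assms(1) by (metis set_map set_sorted_list_of_set)
qed

lemma sorted_list_of_set_nth_rank: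
  fixes A :: "'a::linorder set"
  assumes "finite A" "x \<in> A"
  shows "sorted_list_of_set A ! (card {a\<in>A. a \<le> x} - 1) = x"
proof -
  obtain j where j: "j < card A" "sorted_list_of_set A ! j = x"
    using assms by (metis in_set_conv_nth length_sorted_list_of_set set_sorted_list_of_set)
  have "{a\<in>A. a \<le> x} = insert x {a\<in>A. a < x}"
    using assms(2) by auto
  then have "card {a\<in>A. a \<le> x} = Suc j"
    using assms(1) j card_less_sorted_list_of_set_nth[OF assms(1) j(1)] by simp
  then show ?thesis
    using j by simp
qed

lemma card_run_ends_eq_card_run_starts:
  fixes S :: "nat set"
  assumes "finite S" "0 \<notin> S"
  shows "card {i\<in>S. Suc i \<notin> S} = card {i\<in>S. i - 1 \<notin> S}"
proof -
  have "{i\<in>S. i - 1 \<in> S} = Suc ` {i\<in>S. Suc i \<in> S}"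
  proof (intro set_eqI iffI)
    fix i assume "i \<in> {i\<in>S. i - 1 \<in> S}"
    moreover from this have "i = Suc (i - 1)"
      using assms(2) by (cases i) auto
    ultimately show "i \<in> Suc ` {i\<in>S. Suc i \<in> S}"
      by (metis (no_types, lifting) image_eqI mem_Collect_eq)
  qed auto
  then have "card {i\<in>S. i - 1 \<in> S} = card {i\<in>S. Suc i \<in> S}"
    by (simp add: card_image)
  moreover have "card S = card {i\<in>S. Suc i \<notin> S} + card {i\<in>S. Suc i \<in> S}"
    using card_Int_Diff[OF assms(1), of "{i. Suc i \<in> S}"] by (simp add: Int_def set_diff_eq)
  moreover have "card S = card {i\<in>S. i - 1 \<notin> S} + card {i\<in>S. i - 1 \<in> S}"
    using card_Int_Diff[OF assms(1), of "{i. i - 1 \<in> S}"] by (simp add: Int_def set_diff_eq)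
  ultimately show ?thesis
    by simp
qed

lemma ent_map_upt:
  assumes "1 \<le> i" "i \<le> m"
  shows "ent (map f [1..<m + 1]) i = f i"
  using assms by (simp add: ent_def nth_upt del: upt_Suc)

lemma map_ent_upt: "map (ent p) [1..<length p + 1] = p"
  by (rule nth_equalityI) (simp_all add: ent_def nth_upt del: upt_Suc)

lemma ent_equalityI:
  assumes "length p = length q" "\<And>i. 1 \<le> i \<Longrightarrow> i \<le> length p \<Longrightarrow> ent p i = ent q i"
  shows "p = q"
proof (rule nth_equalityI)
  fix a assume "a < length p"
  then have "ent p (Suc a) = ent q (Suc a)"
    using assms(2) by simp
  then show "p ! a = q ! a"
    by (simp add: ent_def)
qed (fact assms(1))

lemma permutations_of_set_iff_ent:
  "p \<in> permutations_of_set {1..n} \<longleftrightarrow> length p = n \<and> bij_betw (ent p) {1..n} {1..n}"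
proof -
  have set_p: "set p = ent p ` {1..length p}"
    by (metis map_ent_upt set_map set_upt Suc_eq_plus1 atLeastLessThanSuc_atLeastAtMost)
  have distinct_p: "distinct p \<longleftrightarrow> inj_on (ent p) {1..length p}"
    by (metis map_ent_upt distinct_map distinct_upt set_upt Suc_eq_plus1
        atLeastLessThanSuc_atLeastAtMost)
  show ?thesis
  proof
    assume "p \<in> permutations_of_set {1..n}"
    then have "set p = {1..n}" "distinct p"
      by (simp_all add: permutations_of_set_def)
    moreover from this have "length p = n"
      using distinct_card[of p] by simp
    ultimately show "length p = n \<and> bij_betw (ent p) {1..n} {1..n}"
      using set_p distinct_p by (simp add: bij_betw_def)
  next
    assume "length p = n \<and> bij_betw (ent p) {1..n} {1..n}"
    then show "p \<in> permutations_of_set {1..n}"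
      using set_p distinct_p by (simp add: bij_betw_def permutations_of_set_def)
  qed
qed

lemma not_decreasing_triple_if_union_of_increasing:
  fixes f :: "'a::linorder \<Rightarrow> 'b::linorder"
  assumes "strict_mono_on A f" "strict_mono_on B f" "{i, j, l} \<subseteq> A \<union> B" "i < j" "j < l"
  shows "\<not> (f j < f i \<and> f l < f j)"
proof
  assume dec: "f j < f i \<and> f l < f j"
  have "f x < f y" if "x < y" "x \<in> A \<and> y \<in> A \<or> x \<in> B \<and> y \<in> B" for x y
    using that assms(1,2) by (auto dest: strict_mono_onD)
  moreover have "i < l"
    using assms(4,5) by simp
  ultimately show False
    using assms(3-5) dec by (metis Un_iff insert_subset order.asym order.strict_trans)
qed

lemma ldes_eq_Min:
  assumes "p \<noteq> []"
  shows "ldes p = Min (insert (length p) {i\<in>{1..<length p}. ent p (Suc i) < ent p i})"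
proof -
  let ?P = "\<lambda>i. 1 \<le> i \<and> (i < length p \<and> ent p (Suc i) < ent p i \<or> i = length p)"
  have P: "{i. ?P i} = insert (length p) {i\<in>{1..<length p}. ent p (Suc i) < ent p i}"
    using assms by (auto simp: Suc_le_eq)
  have "ldes p = (LEAST i. ?P i)"
    using assms by (simp add: ldes_def)
  also have "\<dots> = Min {i. ?P i}"
  proof (rule Least_Min)
    show "finite {i. ?P i}"
      unfolding P by simp
    show "\<exists>i. ?P i"
      using assms by (intro exI[of _ "length p"]) (simp add: Suc_le_eq)
  qed
  finally show ?thesis
    by (simp only: P)
qed

lemma lseg_eq_Min:
  "lseg d = Min (insert (length d + 1)
     {i\<in>{2..length d}. ent d (i - 1) = ent d i \<and> (i = length d \<or> ent d i \<noteq> ent d (Suc i))})"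
  (is "_ = Min (insert _ ?E)")
proof (cases "?E = {}")
  case False
  then have "Min ?E \<in> ?E"
    by (intro Min_in) auto
  then have "Min ?E \<le> length d"
    by simp
  then show ?thesis
    using False by (simp add: lseg_def Let_def Min_insert)
next
  case True
  then show ?thesis
    unfolding lseg_def Let_def by (simp only: True) simp
qed

section \<open>From Dyck paths to 321-avoiding permutations\<close>

definition level_steps :: "nat list \<Rightarrow> nat set" where
  "level_steps D = {l\<in>{1..<length D}. ent D l = ent D (Suc l)}"

definition missing_values :: "nat list \<Rightarrow> nat set" where
  "missing_values D = {1..length D} - {ent D i + 1 | i. i \<in> {1..length D}}"

lemma length_psi [simp]: "length (psi D) = length D"
  by (simp add: psi_def Let_def del: upt_Suc)

lemma ent_psi:
  assumes "1 \<le> i" "i \<le> length D"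
  shows "ent (psi D) i = (if i = length D \<or> ent D i \<noteq> ent D (Suc i) then ent D i + 1
           else sorted_list_of_set (missing_values D) ! (card {l\<in>level_steps D. l \<le> i} - 1))"
  unfolding psi_def Let_def level_steps_def missing_values_def
  by (simp only: ent_map_upt[OF assms])

definition next_nonexc :: "nat list \<Rightarrow> nat \<Rightarrow> nat" where
  "next_nonexc p i = (LEAST k. i \<le> k \<and> k \<le> length p \<and> ent p k \<le> k)"

definition psi_inv :: "nat list \<Rightarrow> nat list" where
  "psi_inv p = map (\<lambda>i. ent p (next_nonexc p i) - 1) [1..<length p + 1]"

lemma length_psi_inv [simp]: "length (psi_inv p) = length p"
  by (simp add: psi_inv_def del: upt_Suc)

lemma ent_psi_inv:
  "1 \<le> i \<Longrightarrow> i \<le> length p \<Longrightarrow> ent (psi_inv p) i = ent p (next_nonexc p i) - 1"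
  unfolding psi_inv_def by (rule ent_map_upt)

locale dyck_path =
  fixes n :: nat and D :: "nat list"
  assumes in_dyck: "D \<in> dyck n"
begin

abbreviation "d \<equiv> ent D"
abbreviation "\<pi> \<equiv> ent (psi D)"
abbreviation "L \<equiv> level_steps D"
abbreviation "C \<equiv> missing_values D"

lemma length_D: "length D = n"
  using in_dyck by (simp add: dyck_def)

lemma d_le: "1 \<le> i \<Longrightarrow> i \<le> n \<Longrightarrow> d i \<le> i - 1"
  using in_dyck by (simp add: dyck_def)

lemma d_mono:
  assumes "1 \<le> i" "i \<le> j" "j \<le> n"
  shows "d i \<le> d j"
  using assms(2,3)
proof (induction j rule: dec_induct)
  case (step m)
  then have "d m \<le> d (Suc m)"
    using assms(1) in_dyck by (simp add: dyck_def)
  with step show ?case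
    by simp
qed simp

lemma level_steps_eq: "L = {l\<in>{1..<n}. d l = d (Suc l)}"
  by (simp add: level_steps_def length_D)

lemma level_steps_subset: "L \<subseteq> {1..<n}"
  by (auto simp: level_steps_eq)

lemma finite_level_steps [simp]: "finite L"
  using level_steps_subset by (rule finite_subset) simp

definition run_ends :: "nat set" where
  "run_ends = {1..n} - L"

lemma mem_run_ends_iff: "k \<in> run_ends \<longleftrightarrow> 1 \<le> k \<and> k \<le> n \<and> (k = n \<or> d k \<noteq> d (Suc k))"
  by (auto simp: run_ends_def level_steps_eq)

lemma finite_run_ends [simp]: "finite run_ends"
  by (simp add: run_ends_def)

lemma run_ends_level_steps_partition: "run_ends \<union> L = {1..n}" "run_ends \<inter> L = {}"
  using level_steps_subset by (auto simp: run_ends_def)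

lemma d_less_after_run_end:
  assumes "k \<in> run_ends" "k < j" "j \<le> n"
  shows "d k < d j"
proof -
  have "d k \<le> d (Suc k)" "d k \<noteq> d (Suc k)"
    using assms d_mono[of k "Suc k"] by (auto simp: mem_run_ends_iff)
  then have "d k < d (Suc k)"
    by simp
  also have "d (Suc k) \<le> d j"
    using assms by (intro d_mono) auto
  finally show ?thesis .
qed

definition next_run_end :: "nat \<Rightarrow> nat" where
  "next_run_end i = (LEAST k. k \<in> run_ends \<and> i \<le> k)"

lemma next_run_end:
  assumes "1 \<le> i" "i \<le> n"
  shows "next_run_end i \<in> run_ends" "i \<le> next_run_end i" "d (next_run_end i) = d i"
proof -
  have "n \<in> run_ends \<and> i \<le> n"
    using assms by (simp add: mem_run_ends_iff)
  then have k: "next_run_end i \<in> run_ends \<and> i \<le> next_run_end i"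
    unfolding next_run_end_def by (rule LeastI)
  then show "next_run_end i \<in> run_ends" "i \<le> next_run_end i"
    by auto
  have d_constant: "d m = d i" if "i \<le> m" "m \<le> next_run_end i" for m
    using that
  proof (induction m rule: dec_induct)
    case (step m)
    then have "m \<notin> run_ends"
      using not_less_Least[of m "\<lambda>k. k \<in> run_ends \<and> i \<le> k"] by (auto simp: next_run_end_def)
    moreover have "1 \<le> m" "m \<le> n"
      using step k assms by (auto simp: mem_run_ends_iff)
    ultimately have "d (Suc m) = d m"
      by (simp add: mem_run_ends_iff)
    with step show ?case
      by simp
  qed simp
  from d_constant[of "next_run_end i"] k show "d (next_run_end i) = d i"
    by simp
qed

lemma values_eq_image_run_ends: "{d i + 1 | i. i \<in> {1..n}} = (\<lambda>k. d k + 1) ` run_ends"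
proof (intro set_eqI iffI)
  fix v assume "v \<in> {d i + 1 | i. i \<in> {1..n}}"
  then obtain i where "1 \<le> i" "i \<le> n" "v = d i + 1"
    by auto
  then show "v \<in> (\<lambda>k. d k + 1) ` run_ends"
    using next_run_end[of i] by (metis image_eqI)
qed (auto simp: mem_run_ends_iff)

lemma strict_mono_on_run_ends: "strict_mono_on run_ends (\<lambda>k. d k + 1)"
  by (rule strict_mono_onI) (simp add: d_less_after_run_end mem_run_ends_iff)

lemma missing_values_eq: "C = {1..n} - (\<lambda>k. d k + 1) ` run_ends"
  by (simp only: missing_values_def length_D values_eq_image_run_ends)

lemma card_missing_values: "card C = card L"
proof -
  have "(\<lambda>k. d k + 1) ` run_ends \<subseteq> {1..n}"
    using d_le by (fastforce simp: mem_run_ends_iff)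
  moreover have "card ((\<lambda>k. d k + 1) ` run_ends) = card run_ends"
    using strict_mono_on_run_ends by (simp add: card_image strict_mono_on_imp_inj_on)
  moreover have "L \<subseteq> {1..n}"
    using level_steps_subset by auto
  then have "card run_ends = n - card L" "card L \<le> n"
    using card_mono[of "{1..n}" L] by (simp_all add: run_ends_def card_Diff_subset)
  ultimately show ?thesis
    by (simp add: missing_values_eq card_Diff_subset finite_subset)
qed

lemma card_missing_values_le_less_rank:
  assumes "i \<in> L"
  shows "card {c\<in>C. c \<le> i} < card {l\<in>L. l \<le> i}"
proof -
  let ?R = "{k\<in>run_ends. k \<le> i}"
  let ?V = "insert (d i + 1) ((\<lambda>k. d k + 1) ` ?R)"
  have i: "1 \<le> i" "i < n" "i \<notin> run_ends"
    using assms level_steps_subset by (auto simp: run_ends_def)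
  have "{1..i} = ?R \<union> {l\<in>L. l \<le> i}" "?R \<inter> {l\<in>L. l \<le> i} = {}"
    using i run_ends_level_steps_partition by auto
  then have i_eq: "i = card ?R + card {l\<in>L. l \<le> i}"
    by (metis card_Un_disjoint card_atLeastAtMost diff_Suc_1 finite_Un finite_atLeastAtMost)
  have "d i + 1 \<notin> (\<lambda>k. d k + 1) ` ?R"
  proof
    assume "d i + 1 \<in> (\<lambda>k. d k + 1) ` ?R"
    then obtain k where k: "k \<in> run_ends" "k \<le> i" "d k = d i"
      by auto
    then have "k < i"
      using i by (cases "k = i") auto
    then show False
      using d_less_after_run_end[of k i] i k by simp
  qed
  moreover have "inj_on (\<lambda>k. d k + 1) ?R"
    using strict_mono_on_run_ends by (rule strict_mono_on_imp_inj_on[OF monotone_on_subset]) auto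
  ultimately have card_V: "card ?V = Suc (card ?R)"
    by (simp add: card_image)
  have "d i + 1 = d (next_run_end i) + 1" "next_run_end i \<in> run_ends"
    using i next_run_end[of i] by simp_all
  then have "?V \<inter> C = {}"
    by (auto simp: missing_values_eq)
  moreover have V_sub: "?V \<subseteq> {1..i}"
    using i d_le by (fastforce simp: mem_run_ends_iff)
  ultimately have "{c\<in>C. c \<le> i} \<subseteq> {1..i} - ?V"
    by (auto simp: missing_values_eq)
  then have "card {c\<in>C. c \<le> i} \<le> card ({1..i} - ?V)"
    by (intro card_mono) simp_all
  also have "\<dots> = i - card ?V"
    using V_sub by (simp add: card_Diff_subset finite_subset)
  finally have "card {c\<in>C. c \<le> i} \<le> i - card ?V" .
  moreover have "0 < card {l\<in>L. l \<le> i}"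
    using assms by (auto simp: card_gt_0_iff)
  ultimately show ?thesis
    using i_eq card_V by simp
qed

lemma finite_missing_values [simp]: "finite C"
  by (simp add: missing_values_def)

lemma psi_at_run_end: "k \<in> run_ends \<Longrightarrow> \<pi> k = d k + 1"
  using ent_psi[of k D] by (auto simp: mem_run_ends_iff length_D)

lemma psi_at_level_step: "l \<in> L \<Longrightarrow> \<pi> l = sorted_list_of_set C ! (card {m\<in>L. m \<le> l} - 1)"
  using ent_psi[of l D] by (auto simp: level_steps_eq length_D)

lemma rank_level_step_bounds:
  assumes "l \<in> L"
  shows "0 < card {m\<in>L. m \<le> l}" "card {m\<in>L. m \<le> l} \<le> card C"
  using assms card_mono[of L "{m\<in>L. m \<le> l}"] by (auto simp: card_gt_0_iff card_missing_values)

lemma psi_at_level_step_mem: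
  assumes "l \<in> L"
  shows "\<pi> l \<in> C"
proof -
  have "card {m\<in>L. m \<le> l} - 1 < length (sorted_list_of_set C)"
    using rank_level_step_bounds[OF assms] by simp
  then have "\<pi> l \<in> set (sorted_list_of_set C)"
    unfolding psi_at_level_step[OF assms] by (rule nth_mem)
  then show ?thesis
    by simp
qed

lemma less_psi_at_level_step:
  assumes "l \<in> L"
  shows "l < \<pi> l"
proof -
  let ?J = "card {m\<in>L. m \<le> l}"
  have "card {c\<in>C. c \<le> l} \<le> ?J - 1"
    using card_missing_values_le_less_rank[OF assms] by simp
  moreover have "?J - 1 < card C"
    using rank_level_step_bounds[OF assms] by simp
  ultimately show ?thesis
    unfolding psi_at_level_step[OF assms] by (intro less_sorted_list_of_set_nth) simp_all
qed

lemma psi_le_iff_run_end: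
  assumes "1 \<le> i" "i \<le> n"
  shows "\<pi> i \<le> i \<longleftrightarrow> i \<in> run_ends"
proof (cases "i \<in> run_ends")
  case True
  then show ?thesis
    using psi_at_run_end d_le[OF assms] assms(1) by simp
next
  case False
  then have "i \<in> L"
    using assms by (simp add: run_ends_def)
  then show ?thesis
    using less_psi_at_level_step False by (simp add: not_le)
qed

lemma strict_mono_on_psi_run_ends: "strict_mono_on run_ends \<pi>"
  using strict_mono_on_run_ends by (simp add: strict_mono_on_def psi_at_run_end)

lemma strict_mono_on_psi_level_steps: "strict_mono_on L \<pi>"
proof (rule strict_mono_onI)
  fix l m assume lm: "l \<in> L" "m \<in> L" "l < m"
  have "{k\<in>L. k \<le> l} \<subseteq> {k\<in>L. k \<le> m}" "m \<in> {k\<in>L. k \<le> m} - {k\<in>L. k \<le> l}"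
    using lm by auto
  then have "{k\<in>L. k \<le> l} \<subset> {k\<in>L. k \<le> m}"
    by blast
  then have "card {k\<in>L. k \<le> l} < card {k\<in>L. k \<le> m}"
    by (intro psubset_card_mono) simp_all
  then have "card {k\<in>L. k \<le> l} - 1 < card {k\<in>L. k \<le> m} - 1"
    using rank_level_step_bounds(1)[OF lm(1)] by linarith
  moreover have "card {k\<in>L. k \<le> m} - 1 < length (sorted_list_of_set C)"
    using rank_level_step_bounds[OF lm(2)] by simp
  ultimately show "\<pi> l < \<pi> m"
    unfolding psi_at_level_step[OF lm(1)] psi_at_level_step[OF lm(2)]
    using sorted_wrt_nth_less[OF strict_sorted_list_of_set] by blast
qed

lemma bij_betw_psi: "bij_betw \<pi> {1..n} {1..n}"
proof -
  have "\<pi> ` run_ends \<subseteq> (\<lambda>k. d k + 1) ` run_ends"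
    by (simp add: psi_at_run_end)
  moreover have "\<pi> ` L \<subseteq> C"
    using psi_at_level_step_mem by auto
  ultimately have "\<pi> ` run_ends \<inter> \<pi> ` L = {}"
    by (auto simp: missing_values_eq)
  then have "inj_on \<pi> (run_ends \<union> L)"
    using strict_mono_on_psi_run_ends strict_mono_on_psi_level_steps
    by (auto simp: inj_on_Un strict_mono_on_imp_inj_on)
  moreover have "\<pi> ` (run_ends \<union> L) \<subseteq> {1..n}"
    using \<open>\<pi> ` L \<subseteq> C\<close> d_le by (fastforce simp: missing_values_eq psi_at_run_end mem_run_ends_iff)
  ultimately show ?thesis
    unfolding run_ends_level_steps_partition(1) bij_betw_def by (simp add: endo_inj_surj)
qed

lemma psi_in_av321: "psi D \<in> av321 n"
proof -
  have "\<not> (\<pi> j < \<pi> i \<and> \<pi> l < \<pi> j)" if "1 \<le> i" "i < j" "j < l" "l \<le> n" for i j l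
    using that run_ends_level_steps_partition(1)
    by (intro not_decreasing_triple_if_union_of_increasing[OF strict_mono_on_psi_run_ends
          strict_mono_on_psi_level_steps]) auto
  moreover have "psi D \<in> permutations_of_set {1..n}"
    unfolding permutations_of_set_iff_ent using bij_betw_psi by (simp add: length_D)
  ultimately show ?thesis
    by (auto simp: av321_def)
qed

lemma next_nonexc_psi:
  assumes "1 \<le> i" "i \<le> n"
  shows "next_nonexc (psi D) i = next_run_end i"
proof -
  have "(\<lambda>k. i \<le> k \<and> k \<le> length (psi D) \<and> \<pi> k \<le> k) = (\<lambda>k. k \<in> run_ends \<and> i \<le> k)"
    using assms psi_le_iff_run_end by (auto simp: length_D mem_run_ends_iff)
  then show ?thesis
    by (simp add: next_nonexc_def next_run_end_def)
qed

lemma psi_inv_psi: "psi_inv (psi D) = D"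
proof (rule ent_equalityI)
  fix i assume "1 \<le> i" "i \<le> length (psi_inv (psi D))"
  then have i: "1 \<le> i" "i \<le> n"
    by (simp_all add: length_D)
  then show "ent (psi_inv (psi D)) i = d i"
    using next_run_end[OF i] psi_at_run_end by (simp add: ent_psi_inv length_D next_nonexc_psi)
qed (simp add: length_D)

section \<open>Hills, segments and descents\<close>

lemma hill_step_iff_fixed_point:
  assumes "1 \<le> i" "i \<le> n"
  shows "d i = i - 1 \<and> (i < n \<and> d i < d (Suc i) \<or> i = n \<and> d i < n) \<longleftrightarrow> \<pi> i = i"
proof (cases "i \<in> run_ends")
  case True
  then have "i < n \<Longrightarrow> d i < d (Suc i)"
    by (simp add: d_less_after_run_end)
  moreover have "d i < n"
    using d_le[OF assms] assms by simp
  ultimately show ?thesis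
    using psi_at_run_end[OF True] assms by auto
next
  case False
  then have "i \<in> L"
    using assms by (simp add: run_ends_def)
  then show ?thesis
    using less_psi_at_level_step[of i] by (auto simp: level_steps_eq)
qed

lemma hill_eq_fixp: "hill D = fixp (psi D)"
  unfolding hill_def fixp_def Let_def length_psi length_D
  using hill_step_iff_fixed_point by (intro arg_cong[where f = card] Collect_cong) auto

lemma psi_descent_iff:
  assumes "1 \<le> i" "i < n"
  shows "\<pi> (Suc i) < \<pi> i \<longleftrightarrow> i \<in> L \<and> Suc i \<notin> L"
proof (cases "i \<in> L")
  case True
  show ?thesis
  proof (cases "Suc i \<in> L")
    case False
    then have "Suc i \<in> run_ends"
      using assms by (simp add: run_ends_def)
    then have "\<pi> (Suc i) = d i + 1"
      using True psi_at_run_end by (simp add: level_steps_eq)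
    also have "\<dots> \<le> i"
      using d_le[of i] assms by simp
    also have "i < \<pi> i"
      using True by (rule less_psi_at_level_step)
    finally show ?thesis
      using True False by simp
  qed (use True strict_mono_on_psi_level_steps in \<open>auto dest: strict_mono_onD\<close>)
next
  case False
  then have "i \<in> run_ends"
    using assms by (simp add: run_ends_def)
  then have "\<pi> i \<le> i"
    using psi_le_iff_run_end assms by simp
  moreover have "\<pi> i < \<pi> (Suc i)" if "Suc i \<in> run_ends"
    using strict_mono_on_psi_run_ends \<open>i \<in> run_ends\<close> that by (auto dest: strict_mono_onD)
  moreover have "Suc i < \<pi> (Suc i)" if "Suc i \<in> L"
    using that by (rule less_psi_at_level_step)
  ultimately show ?thesis
    using False assms by (fastforce simp: run_ends_def)
qed

lemma descents_psi: "{i\<in>{1..<n}. \<pi> (Suc i) < \<pi> i} = {i\<in>L. Suc i \<notin> L}"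
  using psi_descent_iff level_steps_subset by auto

lemma seg_eq_des: "seg D = des (psi D)"
proof -
  have "i \<in> {i\<in>{1..<n}. d i = d (Suc i) \<and> (i = 1 \<or> d (i - 1) \<noteq> d i)} \<longleftrightarrow>
      i \<in> {i\<in>L. i - 1 \<notin> L}" for i
    by (cases i) (auto simp: level_steps_eq)
  then have "{i\<in>{1..<n}. d i = d (Suc i) \<and> (i = 1 \<or> d (i - 1) \<noteq> d i)} = {i\<in>L. i - 1 \<notin> L}"
    by blast
  then have "seg D = card {i\<in>L. i - 1 \<notin> L}"
    by (simp add: seg_def length_D)
  also have "\<dots> = card {i\<in>L. Suc i \<notin> L}"
    using level_steps_subset by (intro card_run_ends_eq_card_run_starts[symmetric]) auto
  also have "\<dots> = des (psi D)"
    by (simp only: des_def length_psi length_D descents_psi)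
  finally show ?thesis .
qed

lemma lseg_eq_Suc_ldes: "lseg D = ldes (psi D) + 1"
proof (cases "n = 0")
  case True
  then show ?thesis
    using length_D by (simp add: lseg_def ldes_def psi_def)
next
  case False
  let ?S = "{i\<in>L. Suc i \<notin> L}"
  have "psi D \<noteq> []"
    using False length_D length_psi[of D] by fastforce
  have "i \<in> {i\<in>{2..n}. d (i - 1) = d i \<and> (i = n \<or> d i \<noteq> d (Suc i))} \<longleftrightarrow> i \<in> Suc ` ?S"
    for i
    by (cases i) (auto simp: level_steps_eq)
  then have "{i\<in>{2..n}. d (i - 1) = d i \<and> (i = n \<or> d i \<noteq> d (Suc i))} = Suc ` ?S"
    by blast
  then have "lseg D = Min (Suc ` insert n ?S)"
    by (simp add: lseg_eq_Min length_D)
  also have "\<dots> = Suc (Min (insert n ?S))"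
    by (rule mono_Min_commute[symmetric]) (simp_all add: mono_Suc)
  also have "Min (insert n ?S) = ldes (psi D)"
    using \<open>psi D \<noteq> []\<close> ldes_eq_Min[of "psi D"] unfolding length_psi length_D descents_psi by simp
  finally show ?thesis
    by simp
qed

end

section \<open>From 321-avoiding permutations to Dyck paths\<close>

locale av321_perm =
  fixes n :: nat and p :: "nat list"
  assumes in_av321: "p \<in> av321 n"
begin

abbreviation "\<pi> \<equiv> ent p"

lemma length_p: "length p = n" and bij_betw_\<pi>: "bij_betw \<pi> {1..n} {1..n}"
  using in_av321 unfolding av321_def permutations_of_set_iff_ent by simp_all

lemma no_321: "1 \<le> i \<Longrightarrow> i < j \<Longrightarrow> j < l \<Longrightarrow> l \<le> n \<Longrightarrow> \<pi> j < \<pi> i \<Longrightarrow> \<pi> l < \<pi> j \<Longrightarrow> False"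
  using in_av321 by (auto simp: av321_def)

lemma \<pi>_range: "1 \<le> i \<Longrightarrow> i \<le> n \<Longrightarrow> \<pi> i \<in> {1..n}"
  using bij_betw_\<pi> by (auto dest: bij_betw_apply)

lemma \<pi>_inj: "1 \<le> i \<Longrightarrow> i \<le> n \<Longrightarrow> 1 \<le> j \<Longrightarrow> j \<le> n \<Longrightarrow> \<pi> i = \<pi> j \<Longrightarrow> i = j"
  using bij_betw_\<pi> by (auto simp: bij_betw_def dest: inj_onD)

lemma exists_small_value_from:
  assumes "1 \<le> i" "i \<le> n"
  shows "\<exists>m. i \<le> m \<and> m \<le> n \<and> \<pi> m \<le> i"
proof -
  have "card (\<pi> ` {1..i - 1}) < card {1..i}"
    using card_image_le[of "{1..i - 1}" \<pi>] assms(1) by simp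
  then have "\<not> {1..i} \<subseteq> \<pi> ` {1..i - 1}"
    using card_mono[of "\<pi> ` {1..i - 1}" "{1..i}"] by auto
  then obtain v where v: "v \<in> {1..i}" "v \<notin> \<pi> ` {1..i - 1}"
    by blast
  have "v \<in> \<pi> ` {1..n}"
    using bij_betw_\<pi> v(1) assms(2) by (simp add: bij_betw_def)
  then obtain m where "m \<in> {1..n}" "\<pi> m = v"
    by blast
  with v have "i \<le> m \<and> m \<le> n \<and> \<pi> m \<le> i"
    by auto
  then show ?thesis
    by blast
qed

lemma exists_large_value_before:
  assumes "1 \<le> i" "i < j" "j \<le> n" "\<pi> j \<le> i"
  shows "\<exists>q. 1 \<le> q \<and> q \<le> i \<and> i < \<pi> q"
proof (rule ccontr)
  assume small: "\<nexists>q. 1 \<le> q \<and> q \<le> i \<and> i < \<pi> q"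
  have "\<pi> q \<in> {1..i} - {\<pi> j}" if "q \<in> {1..i}" for q
  proof -
    have "\<pi> q \<le> i" "1 \<le> \<pi> q"
      using that small assms \<pi>_range[of q] by auto
    moreover have "\<pi> q \<noteq> \<pi> j"
      using that assms \<pi>_inj[of q j] by auto
    ultimately show ?thesis
      by simp
  qed
  then have "\<pi> ` {1..i} \<subseteq> {1..i} - {\<pi> j}"
    by (rule image_subsetI)
  moreover have "inj_on \<pi> {1..i}"
    using bij_betw_\<pi> assms by (auto simp: bij_betw_def intro: inj_on_subset)
  ultimately have "card {1..i} \<le> card ({1..i} - {\<pi> j})"
    using card_mono[of "{1..i} - {\<pi> j}" "\<pi> ` {1..i}"] by (simp add: card_image)
  moreover have "card ({1..i} - {\<pi> j}) < card {1..i}"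
    using assms \<pi>_range[of j] by (intro card_Diff1_less) simp_all
  ultimately show False
    by simp
qed

lemma strict_mono_on_weak_deficiencies: "strict_mono_on {k\<in>{1..n}. \<pi> k \<le> k} \<pi>"
proof (rule strict_mono_onI, rule ccontr)
  fix i j assume ij: "i \<in> {k\<in>{1..n}. \<pi> k \<le> k}" "j \<in> {k\<in>{1..n}. \<pi> k \<le> k}" "i < j"
    and "\<not> \<pi> i < \<pi> j"
  then have "\<pi> j < \<pi> i"
    using \<pi>_inj[of i j] by fastforce
  moreover obtain q where "1 \<le> q" "q \<le> i" "i < \<pi> q"
    using exists_large_value_before[of i j] ij \<open>\<pi> j < \<pi> i\<close> by auto
  moreover from this have "q < i"
    using ij by (cases "q = i") auto
  ultimately show False
    using no_321[of q i j] ij by auto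
qed

definition excedances :: "nat set" where
  "excedances = {k\<in>{1..n}. k < \<pi> k}"

lemma finite_excedances: "finite excedances"
  by (simp add: excedances_def)

lemma strict_mono_on_excedances: "strict_mono_on excedances \<pi>"
proof (rule strict_mono_onI, rule ccontr)
  fix i j assume "i \<in> excedances" "j \<in> excedances" "i < j" "\<not> \<pi> i < \<pi> j"
  then have ij: "1 \<le> i" "i < \<pi> i" "j \<le> n" "j < \<pi> j" "i < j" "\<not> \<pi> i < \<pi> j"
    by (simp_all add: excedances_def)
  then have "\<pi> j < \<pi> i"
    using \<pi>_inj[of i j] by fastforce
  moreover obtain m where "j \<le> m" "m \<le> n" "\<pi> m \<le> j"
    using exists_small_value_from[of j] ij by auto
  moreover from this have "j < m"
    using ij by (cases "m = j") auto
  ultimately show False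
    using no_321[of i j m] ij by auto
qed

lemma next_nonexc:
  assumes "1 \<le> i" "i \<le> n"
  shows "i \<le> next_nonexc p i" "next_nonexc p i \<le> n" "\<pi> (next_nonexc p i) \<le> next_nonexc p i"
    and "\<And>m. i \<le> m \<Longrightarrow> m < next_nonexc p i \<Longrightarrow> m < \<pi> m"
proof -
  have "i \<le> n \<and> n \<le> length p \<and> \<pi> n \<le> n"
    using assms \<pi>_range[of n] length_p by simp
  then have "i \<le> next_nonexc p i \<and> next_nonexc p i \<le> length p \<and>
      \<pi> (next_nonexc p i) \<le> next_nonexc p i"
    unfolding next_nonexc_def by (rule LeastI)
  then show "i \<le> next_nonexc p i" "next_nonexc p i \<le> n" "\<pi> (next_nonexc p i) \<le> next_nonexc p i"
    using length_p by simp_all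
  fix m assume "i \<le> m" "m < next_nonexc p i"
  then show "m < \<pi> m"
    using \<open>next_nonexc p i \<le> n\<close> not_less_Least[of m "\<lambda>k. i \<le> k \<and> k \<le> length p \<and> \<pi> k \<le> k"]
    by (auto simp: next_nonexc_def length_p)
qed

lemma next_nonexc_self: "i \<le> n \<Longrightarrow> \<pi> i \<le> i \<Longrightarrow> next_nonexc p i = i"
  unfolding next_nonexc_def by (rule Least_equality) (auto simp: length_p)

lemma next_nonexc_Suc:
  assumes "i < \<pi> i"
  shows "next_nonexc p i = next_nonexc p (Suc i)"
proof -
  have "(\<lambda>k. i \<le> k \<and> k \<le> length p \<and> \<pi> k \<le> k) = (\<lambda>k. Suc i \<le> k \<and> k \<le> length p \<and> \<pi> k \<le> k)"
  proof
    fix k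
    show "(i \<le> k \<and> k \<le> length p \<and> \<pi> k \<le> k) = (Suc i \<le> k \<and> k \<le> length p \<and> \<pi> k \<le> k)"
      using assms by (cases "k = i") auto
  qed
  then show ?thesis
    by (simp add: next_nonexc_def)
qed

lemma value_at_next_nonexc_le:
  assumes "1 \<le> i" "i \<le> n"
  shows "\<pi> (next_nonexc p i) \<le> i"
proof (rule ccontr)
  let ?k = "next_nonexc p i"
  assume "\<not> \<pi> ?k \<le> i"
  then have "i < ?k"
    using next_nonexc[OF assms] by (cases "?k = i") auto
  obtain m where m: "i \<le> m" "m \<le> n" "\<pi> m \<le> i"
    using exists_small_value_from[OF assms] by blast
  then have "\<not> m < ?k" "m \<noteq> ?k"
    using next_nonexc(4)[OF assms m(1)] \<open>\<not> \<pi> ?k \<le> i\<close> by auto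
  then have "?k < m"
    by simp
  have "?k - 1 < \<pi> (?k - 1)"
    using next_nonexc(4)[OF assms, of "?k - 1"] \<open>i < ?k\<close> by simp
  moreover have "\<pi> (?k - 1) \<noteq> \<pi> ?k"
    using \<pi>_inj[of "?k - 1" ?k] \<open>i < ?k\<close> \<open>?k < m\<close> m assms by fastforce
  ultimately have "\<pi> ?k < \<pi> (?k - 1)"
    using next_nonexc(3)[OF assms] by simp
  moreover have "\<pi> m < \<pi> ?k"
    using m(3) \<open>\<not> \<pi> ?k \<le> i\<close> by simp
  moreover have "1 \<le> ?k - 1" "?k - 1 < ?k"
    using \<open>i < ?k\<close> assms(1) by linarith+
  ultimately show False
    using no_321 \<open>?k < m\<close> m(2) by blast
qed

lemma psi_inv_in_dyck: "psi_inv p \<in> dyck n"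
proof -
  let ?q = "ent (psi_inv p)"
  have q: "?q i = \<pi> (next_nonexc p i) - 1" if "1 \<le> i" "i \<le> n" for i
    using that by (simp add: ent_psi_inv length_p)
  have "?q i \<le> ?q (Suc i)" if "1 \<le> i" "i < n" for i
  proof (cases "\<pi> i \<le> i")
    case True
    let ?k = "next_nonexc p (Suc i)"
    have "Suc i \<le> ?k" "?k \<le> n" "\<pi> ?k \<le> ?k"
      using next_nonexc[of "Suc i"] that by auto
    then have "\<pi> i < \<pi> ?k"
      by (intro strict_mono_onD[OF strict_mono_on_weak_deficiencies]) (use True that in auto)
    then show ?thesis
      using that q[of i] q[of "Suc i"] next_nonexc_self[of i] True by simp
  next
    case False
    then show ?thesis
      using that q[of i] q[of "Suc i"] next_nonexc_Suc[of i] by simp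
  qed
  moreover have "?q i \<le> i - 1" if "1 \<le> i" "i \<le> n" for i
    using that q value_at_next_nonexc_le by fastforce
  ultimately show ?thesis
    by (simp add: dyck_def length_p)
qed

lemma psi_inv_level_iff:
  assumes "1 \<le> l" "l < n"
  shows "ent (psi_inv p) l = ent (psi_inv p) (Suc l) \<longleftrightarrow> l < \<pi> l"
proof (cases "l < \<pi> l")
  case True
  then show ?thesis
    using assms by (simp add: ent_psi_inv length_p next_nonexc_Suc)
next
  case False
  let ?k = "next_nonexc p (Suc l)"
  have "l < ?k" "?k \<le> n"
    using next_nonexc[of "Suc l"] assms by auto
  then have "\<pi> l \<noteq> \<pi> ?k" "1 \<le> \<pi> l" "1 \<le> \<pi> ?k"
    using \<pi>_inj[of l ?k] \<pi>_range[of l] \<pi>_range[of ?k] assms by auto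
  then show ?thesis
    using False assms next_nonexc_self[of l] by (simp add: ent_psi_inv length_p)
qed

lemma level_steps_psi_inv: "level_steps (psi_inv p) = excedances"
proof -
  have "n \<notin> excedances"
    using \<pi>_range[of n] by (auto simp: excedances_def)
  then show ?thesis
    using psi_inv_level_iff by (auto simp: level_steps_def excedances_def length_p le_less)
qed

lemma missing_values_psi_inv: "missing_values (psi_inv p) = \<pi> ` excedances"
proof -
  let ?N = "{k\<in>{1..n}. \<pi> k \<le> k}"
  have "ent (psi_inv p) i + 1 = \<pi> (next_nonexc p i)" "next_nonexc p i \<in> ?N"
    if "1 \<le> i" "i \<le> n" for i
    using that next_nonexc[OF that] \<pi>_range[of "next_nonexc p i"]
    by (auto simp: ent_psi_inv length_p)
  moreover have "next_nonexc p k = k" if "k \<in> ?N" for k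
    using that by (simp add: next_nonexc_self)
  ultimately have "{ent (psi_inv p) i + 1 | i. i \<in> {1..n}} = \<pi> ` ?N"
    by (auto simp: image_iff) (metis atLeastAtMost_iff)
  moreover have "{1..n} - \<pi> ` ?N = \<pi> ` ({1..n} - ?N)"
  proof -
    have "\<pi> ` ({1..n} - ?N) = \<pi> ` {1..n} - \<pi> ` ?N"
      using bij_betw_\<pi> by (intro inj_on_image_set_diff[of \<pi> "{1..n}"]) (auto simp: bij_betw_def)
    then show ?thesis
      using bij_betw_\<pi> by (simp add: bij_betw_def)
  qed
  moreover have "{1..n} - ?N = excedances"
    by (auto simp: excedances_def)
  ultimately show ?thesis
    by (simp add: missing_values_def length_p)
qed

lemma psi_psi_inv: "psi (psi_inv p) = p"
proof (rule ent_equalityI)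
  let ?q = "psi_inv p"
  fix i assume "1 \<le> i" "i \<le> length (psi ?q)"
  then have i: "1 \<le> i" "i \<le> n"
    by (simp_all add: length_p)
  show "ent (psi ?q) i = \<pi> i"
  proof (cases "i < \<pi> i")
    case False
    then have "i = n \<or> ent ?q i \<noteq> ent ?q (Suc i)"
      using psi_inv_level_iff[of i] i by auto
    then show ?thesis
      using i False \<pi>_range[of i] by (simp add: ent_psi ent_psi_inv length_p next_nonexc_self)
  next
    case True
    have "i \<in> excedances" "i \<noteq> n"
      using i True \<pi>_range[of i] by (auto simp: excedances_def)
    then have "ent (psi ?q) i =
        sorted_list_of_set (\<pi> ` excedances) ! (card {l\<in>excedances. l \<le> i} - 1)"
      using i True psi_inv_level_iff[of i]
      by (simp add: ent_psi length_p level_steps_psi_inv missing_values_psi_inv)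
    also have "\<dots> = \<pi> (sorted_list_of_set excedances ! (card {l\<in>excedances. l \<le> i} - 1))"
    proof -
      have "card {l\<in>excedances. l \<le> i} \<le> card excedances" "0 < card {l\<in>excedances. l \<le> i}"
        using \<open>i \<in> excedances\<close> by (auto simp: excedances_def card_gt_0_iff intro: card_mono)
      then show ?thesis
        using strict_mono_on_excedances
        by (simp add: sorted_list_of_set_image_strict_mono_on excedances_def)
    qed
    also have "\<dots> = \<pi> i"
      using sorted_list_of_set_nth_rank[OF finite_excedances \<open>i \<in> excedances\<close>] by (rule arg_cong)
    finally show ?thesis .
  qed
qed (simp add: length_p)

end

theorem lemma4p4:
  fixes n :: nat
  shows "bij_betw psi (dyck n) (av321 n) \<and>
    (\<forall>D\<in>dyck n. hill D = fixp (psi D) \<and> seg D = des (psi D) \<and> lseg D = ldes (psi D) + 1)"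
proof (intro conjI ballI)
  show "bij_betw psi (dyck n) (av321 n)"
  proof (rule bij_betw_byWitness[where f' = psi_inv])
    show "\<forall>D\<in>dyck n. psi_inv (psi D) = D"
      using dyck_path.psi_inv_psi by (simp add: dyck_path_def)
    show "\<forall>p\<in>av321 n. psi (psi_inv p) = p"
      using av321_perm.psi_psi_inv by (simp add: av321_perm_def)
    show "psi ` dyck n \<subseteq> av321 n"
      using dyck_path.psi_in_av321 by (auto simp: dyck_path_def)
    show "psi_inv ` av321 n \<subseteq> dyck n"
      using av321_perm.psi_inv_in_dyck by (auto simp: av321_perm_def)
  qed
next
  fix D assume "D \<in> dyck n"
  then interpret dyck_path n D
    by unfold_locales
  show "hill D = fixp (psi D)" "seg D = des (psi D)" "lseg D = ldes (psi D) + 1"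
    by (fact hill_eq_fixp seg_eq_des lseg_eq_Suc_ldes)+
qed

end
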